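(* Let $A:\mathbb{R}\to M_{n\times n}(\mathbb{R})$, $K:\mathbb{R}\to M_{n\times m}(\mathbb{R})$, $C:\mathbb{R}\to M_{m\times n}(\mathbb{R})$ be continuous. Suppose $\dot x=A(t)x$ has non-uniform bounded growth with constants $K_0>0$, $a>0$, $\varepsilon>0$, and that there exist $\mathcal{K},\mathcal{C}>0$, $\delta>0$, $\gamma\ge0$ with $\|K(z)\|\le\mathcal{K}e^{-\delta|z|}$ and $\|C(z)\|\le\mathcal{C}e^{\gamma|z|}$ for all $z\in\mathbb{R}$, and $\delta>\gamma+\varepsilon$. Then the system $\dot x=A(t)x,\ y=C(t)x$ is non-uniformly completely observable (NUCO) if and only if the system $\dot x=(A(t)-K(t)C(t))x,\ y=C(t)x$ is NUCO.
   Context: For a continuous $V:\mathbb{R}\to M_{n\times n}(\mathbb{R})$, $\Phi_V(t,s)$ is the transition matrix of $\dot x=V(t)x$. Non-uniform bounded growth with constants $K_0>0,a>0,\eta>0$: $\|\Phi_V(t,\tau)\|\le K_0e^{\eta|\tau|}e^{a|t-\tau|}$ for all $t,\tau\in\mathbb{R}$. For the pair $(V,C)$ define the observability Gramians $M_V(a,b)=\int_a^b\Phi_V^T(s,a)C^T(s)C(s)\Phi_V(s,a)\,ds$ and $N_V(a,b)=\int_a^b\Phi_V^T(s,b)C^T(s)C(s)\Phi_V(s,b)\,ds$. The system $\dot x=V(t)x,\ y=C(t)x$ is non-uniformly completely observable (NUCO) on $\mathbb{R}$ if there exist constants $\nu_0,\nu_1,\bar\nu_0,\bar\nu_1\ge0$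 and functions $\vartheta_0,\varrho_0,\vartheta_1,\varrho_1:[0,\infty)\to(0,\infty)$ such that for every $t\in\mathbb{R}$ there is $\sigma_0(t)>0$ with $e^{-2\nu_0|t|}\vartheta_0(\sigma)I\le M_V(t,t+\sigma)\le e^{2\nu_1|t|}\vartheta_1(\sigma)I$ and $e^{-2\bar\nu_0|t|}\varrho_0(\sigma)I\le N_V(t,t+\sigma)\le e^{2\bar\nu_1|t|}\varrho_1(\sigma)I$ for every $\sigma\ge\sigma_0(t)$. Matrix inequalities are in the sense of the Loewner order on symmetric matrices. *)

theory Defs
  imports "HOL-Analysis.Analysis"
begin

definition mnorm :: "real^'n^'m \<Rightarrow> real" where
  "mnorm M = onorm (\<lambda>x. M *v x)"

definition is_transition :: "(real \<Rightarrow> real^'n^'n) \<Rightarrow> (real \<Rightarrow> real \<Rightarrow> real^'n^'n) \<Rightarrow> bool" where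
  "is_transition V Phi \<longleftrightarrow>
     (\<forall>s. Phi s s = mat 1 \<and>
       (\<forall>t. ((\<lambda>r. Phi r s) has_vector_derivative (V t ** Phi t s)) (at t)))"

text \<open>The transition matrix (unique for continuous V).\<close>
definition transition :: "(real \<Rightarrow> real^'n^'n) \<Rightarrow> real \<Rightarrow> real \<Rightarrow> real^'n^'n" where
  "transition V = (THE Phi. is_transition V Phi)"

definition nonuniform_bounded_growth :: "(real \<Rightarrow> real^'n^'n) \<Rightarrow> real \<Rightarrow> real \<Rightarrow> real \<Rightarrow> bool" where
  "nonuniform_bounded_growth V K0 a \<eta> \<longleftrightarrow>
     (\<forall>t \<tau>. mnorm (transition V t \<tau>) \<le> K0 * exp (\<eta> * \<bar>\<tau>\<bar>) * exp (a * \<bar>t - \<tau>\<bar>))"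

definition loewner_le :: "real^'n^'n \<Rightarrow> real^'n^'n \<Rightarrow> bool" where
  "loewner_le P Q \<longleftrightarrow> (\<forall>x. x \<bullet> (P *v x) \<le> x \<bullet> (Q *v x))"

definition gram_M :: "(real \<Rightarrow> real^'n^'n) \<Rightarrow> (real \<Rightarrow> real^'n^'m) \<Rightarrow> real \<Rightarrow> real \<Rightarrow> real^'n^'n" where
  "gram_M V C a b = integral {a..b}
     (\<lambda>s. transpose (transition V s a) ** transpose (C s) ** C s ** transition V s a)"

definition gram_N :: "(real \<Rightarrow> real^'n^'n) \<Rightarrow> (real \<Rightarrow> real^'n^'m) \<Rightarrow> real \<Rightarrow> real \<Rightarrow> real^'n^'n" where
  "gram_N V C a b = integral {a..b}
     (\<lambda>s. transpose (transition V s b) ** transpose (C s) ** C s ** transition V s b)"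

definition NUCO :: "(real \<Rightarrow> real^'n^'n) \<Rightarrow> (real \<Rightarrow> real^'n^'m) \<Rightarrow> bool" where
  "NUCO V C \<longleftrightarrow>
    (\<exists>\<nu>0 \<nu>1 \<nu>0' \<nu>1' (\<theta>0::real\<Rightarrow>real) (\<rho>0::real\<Rightarrow>real) (\<theta>1::real\<Rightarrow>real) (\<rho>1::real\<Rightarrow>real).
       \<nu>0 \<ge> 0 \<and> \<nu>1 \<ge> 0 \<and> \<nu>0' \<ge> 0 \<and> \<nu>1' \<ge> 0 \<and>
       (\<forall>\<sigma>\<ge>0. \<theta>0 \<sigma> > 0 \<and> \<rho>0 \<sigma> > 0 \<and> \<theta>1 \<sigma> > 0 \<and> \<rho>1 \<sigma> > 0) \<and>
       (\<forall>t. \<exists>\<sigma>0>0. \<forall>\<sigma>\<ge>\<sigma>0.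
          loewner_le ((exp (-2 * \<nu>0 * \<bar>t\<bar>) * \<theta>0 \<sigma>) *\<^sub>R mat 1) (gram_M V C t (t + \<sigma>)) \<and>
          loewner_le (gram_M V C t (t + \<sigma>)) ((exp (2 * \<nu>1 * \<bar>t\<bar>) * \<theta>1 \<sigma>) *\<^sub>R mat 1) \<and>
          loewner_le ((exp (-2 * \<nu>0' * \<bar>t\<bar>) * \<rho>0 \<sigma>) *\<^sub>R mat 1) (gram_N V C t (t + \<sigma>)) \<and>
          loewner_le (gram_N V C t (t + \<sigma>)) ((exp (2 * \<nu>1' * \<bar>t\<bar>) * \<rho>1 \<sigma>) *\<^sub>R mat 1)))"

end

theory Submission
  imports Defs
begin

text \<open>
  Write \<open>B = A - K C\<close>. Variation of constants expresses \<open>\<Phi>\<^sub>B(t,s)\<close> as \<open>\<Phi>\<^sub>A(t,s)\<close> minus the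
  integral of \<open>\<Phi>\<^sub>A(t,r) K(r) C(r) \<Phi>\<^sub>B(r,s)\<close> over \<open>r\<close> between \<open>s\<close> and \<open>t\<close>. Since
  \<open>\<delta> \<ge> \<gamma> + \<epsilon>\<close>, the factor \<open>exp(\<epsilon>|r|)\<close> in the growth bound of \<open>\<Phi>\<^sub>A(t,r)\<close> is absorbed by
  \<open>|K(r)| |C(r)| \<le> \<K> \<C> exp(-(\<delta> - \<gamma>)|r|)\<close>, so Gronwall's inequality shows that \<open>B\<close> again has
  non-uniform bounded growth, with the same \<open>K0\<close> and \<open>\<epsilon>\<close>. For the same reason the kernel
  \<open>C(s) \<Phi>\<^sub>X(s,r) K(r)\<close> is bounded on every window \<open>|s - r| \<le> \<sigma>\<close> by a constant \<open>L(\<sigma>)\<close> that does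
  not depend on where the window lies, both for \<open>X = A\<close> and for \<open>X = B\<close> (as \<open>A = B - (-K) C\<close>).
  Feeding variation of constants into the output \<open>C \<Phi> x\<close> and applying Cauchy-Schwarz gives
  \<open>M\<^sub>A(t,t+\<sigma>) \<le> c(\<sigma>) M\<^sub>B(t,t+\<sigma>)\<close> and \<open>M\<^sub>B(t,t+\<sigma>) \<le> c(\<sigma>) M\<^sub>A(t,t+\<sigma>)\<close> in the Loewner order,
  with \<open>c(\<sigma>) = 2 + 2 L(\<sigma>)\<^sup>2 \<sigma>\<^sup>2\<close>, and likewise for \<open>N\<close>. So the NUCO bounds of either system give
  those of the other, with \<open>\<theta>0, \<rho>0\<close> divided and \<open>\<theta>1, \<rho>1\<close> multiplied by \<open>c(\<sigma>)\<close>.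
\<close>

section \<open>Matrix algebra\<close>

lemma matrix_add_rdistrib: "((A::'a::semiring_1^'n^'m) + B) ** (C::'a^'k^'n) = A ** C + B ** C"
  by (vector matrix_matrix_mult_def sum.distrib distrib_right)

lemma matrix_diff_rdistrib: "((A::'a::ring_1^'n^'m) - B) ** (C::'a^'k^'n) = A ** C - B ** C"
  by (vector matrix_matrix_mult_def sum_subtractf left_diff_distrib)

lemma matrix_diff_ldistrib: "(A::'a::ring_1^'n^'m) ** ((B::'a^'k^'n) - C) = A ** B - A ** C"
  by (vector matrix_matrix_mult_def sum_subtractf right_diff_distrib)

lemma matrix_mul_minus_left: "(- (A::'a::ring_1^'n^'m)) ** (B::'a^'k^'n) = - (A ** B)"
  by (vector matrix_matrix_mult_def sum_negf)

lemma matrix_mul_minus_right: "(A::'a::ring_1^'n^'m) ** (- (B::'a^'k^'n)) = - (A ** B)"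
  by (vector matrix_matrix_mult_def sum_negf)

lemma matrix_vector_mult_minus_left: "(- (M::'a::ring_1^'n^'m)) *v x = - (M *v x)"
  by (vector matrix_vector_mult_def sum_negf)

lemma matrix_vector_mult_minus_right: "(M::'a::ring_1^'n^'m) *v (- x) = - (M *v x)"
  by (vector matrix_vector_mult_def sum_negf)

lemma transpose_add: "transpose ((A::'a::plus^'n^'m) + B) = transpose A + transpose B"
  by (simp add: transpose_def vec_eq_iff)

lemma transpose_minus: "transpose (- (A::'a::uminus^'n^'m)) = - transpose A"
  by (simp add: transpose_def vec_eq_iff)

lemma bounded_linear_transpose: "bounded_linear (transpose :: real^'n^'m \<Rightarrow> real^'m^'n)"
  by (auto simp: linear_conv_bounded_linear[symmetric] transpose_add transpose_scalar intro!: linearI)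

lemma bounded_bilinear_matrix_matrix_mult: "bounded_bilinear (\<lambda>(A::real^'n^'m) (B::real^'k^'n). A ** B)"
  unfolding bilinear_conv_bounded_bilinear[symmetric] bilinear_def
  by (auto intro!: linearI simp: matrix_add_ldistrib matrix_add_rdistrib scalar_matrix_assoc matrix_scalar_ac)

lemma bounded_bilinear_matrix_vector_mult: "bounded_bilinear (\<lambda>(A::real^'n^'m) (x::real^'n). A *v x)"
  unfolding bilinear_conv_bounded_bilinear[symmetric] bilinear_def
  by (auto intro!: linearI simp: matrix_vector_right_distrib matrix_vector_mult_add_rdistrib
      matrix_vector_mult_scaleR scaleR_matrix_vector_assoc)

lemma norm_matrix_vector_le_mnorm: "norm (M *v x) \<le> mnorm M * norm x"
  unfolding mnorm_def by (rule onorm[OF matrix_vector_mul_bounded_linear])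

lemma mnorm_nonneg: "0 \<le> mnorm M"
  unfolding mnorm_def by (rule onorm_pos_le[OF matrix_vector_mul_bounded_linear])

lemma mnorm_le: "(\<And>x. norm (M *v x) \<le> b * norm x) \<Longrightarrow> mnorm M \<le> b"
  unfolding mnorm_def by (rule onorm_le)

lemma mnorm_minus: "mnorm (- M) = mnorm M"
  unfolding mnorm_def matrix_vector_mult_minus_left by (rule onorm_neg)

lemma norm_matrix_vector_le: "mnorm M \<le> b \<Longrightarrow> norm (M *v x) \<le> b * norm x"
  using norm_matrix_vector_le_mnorm[of M x] by (meson mult_right_mono norm_ge_zero order_trans)

lemma norm_matrix_vector_le3:
  assumes "mnorm M1 \<le> b1" "mnorm M2 \<le> b2" "mnorm M3 \<le> b3"
  shows "norm (M1 *v (M2 *v (M3 *v x))) \<le> b1 * b2 * b3 * norm x"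
proof -
  have "b1 \<ge> 0" "b2 \<ge> 0" using assms mnorm_nonneg order_trans by blast+
  have "norm (M1 *v (M2 *v (M3 *v x))) \<le> b1 * norm (M2 *v (M3 *v x))"
    by (rule norm_matrix_vector_le[OF assms(1)])
  also have "\<dots> \<le> b1 * (b2 * norm (M3 *v x))"
    using \<open>b1 \<ge> 0\<close> by (intro mult_left_mono norm_matrix_vector_le[OF assms(2)])
  also have "\<dots> \<le> b1 * (b2 * (b3 * norm x))"
    using \<open>b1 \<ge> 0\<close> \<open>b2 \<ge> 0\<close> by (intro mult_left_mono norm_matrix_vector_le[OF assms(3)])
  finally show ?thesis by (simp add: mult.assoc)
qed

section \<open>Oriented integrals\<close>

definition oriented_integral :: "(real \<Rightarrow> 'a::banach) \<Rightarrow> real \<Rightarrow> real \<Rightarrow> 'a" where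
  "oriented_integral f s t = (if s \<le> t then integral {s..t} f else - integral {t..s} f)"

lemma integrable_on_continuous_UNIV:
  "continuous_on UNIV (f :: real \<Rightarrow> 'a::banach) \<Longrightarrow> f integrable_on {a..b}"
  by (rule integrable_continuous_real) (rule continuous_on_subset, auto)

lemma oriented_integral_self [simp]: "oriented_integral f s s = 0"
  by (simp add: oriented_integral_def)

lemma oriented_integral_reflect: "oriented_integral (\<lambda>r. f (- r)) (- s) (- t) = - oriented_integral f s t"
  by (auto simp: oriented_integral_def)

lemma has_vector_derivative_oriented_integral:
  fixes f :: "real \<Rightarrow> 'a::banach"
  assumes f: "continuous_on UNIV f"
  shows "((\<lambda>u. oriented_integral f s u) has_vector_derivative f t) (at t)"
proof -
  define b where "b = min s t - 1"
  have diff: "oriented_integral f s u = integral {b..u} f - integral {b..s} f" if "b < u" for u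
  proof (cases "s \<le> u")
    case True
    have "integral {b..s} f + integral {s..u} f = integral {b..u} f"
      using True by (intro Henstock_Kurzweil_Integration.integral_combine
          integrable_on_continuous_UNIV[OF f]) (auto simp: b_def)
    then show ?thesis using True by (simp add: oriented_integral_def algebra_simps)
  next
    case False
    have "integral {b..u} f + integral {u..s} f = integral {b..s} f"
      using False that by (intro Henstock_Kurzweil_Integration.integral_combine
          integrable_on_continuous_UNIV[OF f]) auto
    then show ?thesis using False by (simp add: oriented_integral_def algebra_simps)
  qed
  have "((\<lambda>u. integral {b..u} f) has_vector_derivative f t) (at t within {b..t+1})"
    by (rule integral_has_vector_derivative) (auto intro: continuous_on_subset[OF f] simp: b_def)
  moreover have "at t within {b..t+1} = at t"
    by (rule at_within_interior) (auto simp: b_def)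
  ultimately have "((\<lambda>u. integral {b..u} f - integral {b..s} f) has_vector_derivative f t) (at t)"
    by (simp add: has_vector_derivative_diff_const)
  moreover have "t \<in> {b<..}" by (simp add: b_def)
  ultimately show ?thesis
    by (rule has_vector_derivative_transform_within_open[OF _ open_greaterThan]) (simp add: diff)
qed

lemma oriented_integral_unique:
  fixes h :: "real \<Rightarrow> 'a::banach"
  assumes H: "\<And>t. (H has_vector_derivative h t) (at t)" and h: "continuous_on UNIV h" and "H s = 0"
  shows "oriented_integral h s t = H t"
proof -
  have "((\<lambda>u. H u - oriented_integral h s u) has_vector_derivative 0) (at x within UNIV)" for x
    using has_vector_derivative_diff[OF H has_vector_derivative_oriented_integral[OF h]] by simp
  then obtain c where "\<And>x. H x - oriented_integral h s x = c"
    using has_vector_derivative_zero_constant[of UNIV "\<lambda>u. H u - oriented_integral h s u"] by auto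
  from this[of s] this[of t] \<open>H s = 0\<close> show ?thesis by simp
qed

lemma oriented_integral_ftc:
  fixes h :: "real \<Rightarrow> 'a::banach"
  assumes "\<And>t. (H has_vector_derivative h t) (at t)" and "continuous_on UNIV h"
  shows "oriented_integral h s t = H t - H s"
proof (rule oriented_integral_unique)
  show "((\<lambda>u. H u - H s) has_vector_derivative h t) (at t)" for t
    using assms(1) by (simp add: has_vector_derivative_diff_const)
qed (use assms in auto)

lemma oriented_integral_linear:
  fixes f :: "real \<Rightarrow> 'a::banach" and L :: "'a \<Rightarrow> 'b::banach"
  assumes L: "bounded_linear L" and f: "continuous_on UNIV f"
  shows "oriented_integral (\<lambda>r. L (f r)) s t = L (oriented_integral f s t)"
proof (rule oriented_integral_unique)
  show "((\<lambda>t. L (oriented_integral f s t)) has_vector_derivative L (f t)) (at t)" for t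
    using bounded_linear.has_vector_derivative[OF L has_vector_derivative_oriented_integral[OF f]] .
  show "continuous_on UNIV (\<lambda>r. L (f r))"
    using bounded_linear.continuous_on[OF L f] .
qed (use L in \<open>simp add: linear_simps\<close>)

lemma oriented_integral_sum:
  fixes f :: "nat \<Rightarrow> real \<Rightarrow> 'a::banach"
  assumes f: "\<And>i. continuous_on UNIV (f i)"
  shows "oriented_integral (\<lambda>r. \<Sum>i<n. f i r) s t = (\<Sum>i<n. oriented_integral (f i) s t)"
proof (rule oriented_integral_unique)
  show "((\<lambda>t. \<Sum>i<n. oriented_integral (f i) s t) has_vector_derivative (\<Sum>i<n. f i t)) (at t)" for t
    by (intro has_vector_derivative_sum has_vector_derivative_oriented_integral f)
qed (use f in \<open>auto intro: continuous_intros\<close>)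

lemma oriented_integral_cong:
  "(\<And>r. r \<in> {min s t..max s t} \<Longrightarrow> f r = g r) \<Longrightarrow> oriented_integral f s t = oriented_integral g s t"
  by (auto simp: oriented_integral_def intro!: integral_cong)

lemma oriented_integral_nonneg:
  fixes g :: "real \<Rightarrow> real"
  assumes "continuous_on UNIV g" "s \<le> t" "\<And>r. r \<in> {s..t} \<Longrightarrow> 0 \<le> g r"
  shows "0 \<le> oriented_integral g s t"
  using assms by (auto simp: oriented_integral_def integrable_on_continuous_UNIV
      intro!: Henstock_Kurzweil_Integration.integral_nonneg)

lemma norm_oriented_integral_le:
  fixes f :: "real \<Rightarrow> 'a::banach"
  assumes "continuous_on UNIV f" "continuous_on UNIV g"
    and "\<And>r. r \<in> {min s t..max s t} \<Longrightarrow> norm (f r) \<le> g r"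
  shows "norm (oriented_integral f s t) \<le> \<bar>oriented_integral g s t\<bar>"
proof -
  have "norm (integral {min s t..max s t} f) \<le> integral {min s t..max s t} g"
    using assms by (intro integral_norm_bound_integral integrable_on_continuous_UNIV) auto
  then show ?thesis
    by (cases "s \<le> t") (auto simp: oriented_integral_def min_def max_def)
qed

lemma abs_oriented_integral_le_integral:
  fixes g :: "real \<Rightarrow> real"
  assumes g: "continuous_on UNIV g" and "\<And>r. r \<in> {p..q} \<Longrightarrow> 0 \<le> g r"
    and "s \<in> {p..q}" "t \<in> {p..q}"
  shows "\<bar>oriented_integral g s t\<bar> \<le> integral {p..q} g"
proof -
  have sub: "{min s t..max s t} \<subseteq> {p..q}"
    using assms(3,4) by auto
  have "integral {min s t..max s t} g \<le> integral {p..q} g"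
    using assms by (intro integral_subset_le integrable_on_continuous_UNIV sub) auto
  moreover have "0 \<le> integral {min s t..max s t} g"
    using assms(2) sub by (intro Henstock_Kurzweil_Integration.integral_nonneg integrable_on_continuous_UNIV g) blast+
  ultimately show ?thesis
    by (cases "s \<le> t") (auto simp: oriented_integral_def min_def max_def)
qed

lemma tendsto_oriented_integral_uniform_limit:
  fixes f :: "nat \<Rightarrow> real \<Rightarrow> 'a::banach"
  assumes "uniform_limit {min s t..max s t} f g sequentially" and "\<And>n. continuous_on UNIV (f n)"
  shows "(\<lambda>n. oriented_integral (f n) s t) \<longlonglongrightarrow> oriented_integral g s t"
proof -
  have cont: "continuous_on {min s t..max s t} (f n)" for n
    using assms(2) continuous_on_subset by blast
  obtain I J where I: "\<And>n. (f n has_integral I n) {min s t..max s t}"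
    and J: "(g has_integral J) {min s t..max s t}" and "I \<longlonglongrightarrow> J"
    by (rule uniform_limit_integral[OF assms(1)]) (use cont in auto)
  then have "(\<lambda>n. integral {min s t..max s t} (f n)) \<longlonglongrightarrow> integral {min s t..max s t} g"
    using integral_unique[OF I] integral_unique[OF J] by simp
  then show ?thesis
    by (cases "s \<le> t") (auto simp: oriented_integral_def min_def max_def intro: tendsto_minus)
qed

lemma abs_oriented_integral_power:
  assumes "0 \<le> c"
  shows "\<bar>oriented_integral (\<lambda>r. c * \<bar>r\<bar>^k) 0 t\<bar> = c * \<bar>t\<bar>^Suc k / Suc k"
proof -
  have pos: "oriented_integral (\<lambda>r. c * \<bar>r\<bar>^k) 0 t = c * t^Suc k / Suc k" if "0 \<le> t" for t
  proof -
    have "oriented_integral (\<lambda>r. c * \<bar>r\<bar>^k) 0 t = oriented_integral (\<lambda>r. c * r^k) 0 t"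
      using that by (intro oriented_integral_cong) auto
    also have "\<dots> = c * t^Suc k / Suc k"
    proof (rule oriented_integral_unique)
      show "((\<lambda>u. c * u^Suc k / Suc k) has_vector_derivative c * u^k) (at u)" for u
        unfolding has_real_derivative_iff_has_vector_derivative[symmetric]
        by (rule derivative_eq_intros refl | simp)+
    qed (auto intro!: continuous_intros)
    finally show ?thesis .
  qed
  show ?thesis
  proof (cases "0 \<le> t")
    case True
    then show ?thesis using pos assms by simp
  next
    case False
    then have "\<bar>t\<bar> = - t" by simp
    then have eq: "oriented_integral (\<lambda>r. c * \<bar>r\<bar>^k) 0 t = - (c * \<bar>t\<bar>^Suc k / Suc k)"
      using oriented_integral_reflect[of "\<lambda>r. c * \<bar>r\<bar>^k" 0 "- t"] pos[of "- t"] False by simp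
    have "0 \<le> c * \<bar>t\<bar>^Suc k / Suc k" using assms by simp
    then show ?thesis unfolding eq abs_minus_cancel by (rule abs_of_nonneg)
  qed
qed

section \<open>The transition matrix\<close>

primrec peano_baker_term :: "(real \<Rightarrow> real^'n^'n) \<Rightarrow> nat \<Rightarrow> real \<Rightarrow> real^'n^'n" where
  "peano_baker_term V 0 = (\<lambda>t. mat 1)"
| "peano_baker_term V (Suc k) = (\<lambda>t. oriented_integral (\<lambda>r. V r ** peano_baker_term V k r) 0 t)"

definition fundamental_matrix :: "(real \<Rightarrow> real^'n^'n) \<Rightarrow> real \<Rightarrow> real^'n^'n" where
  "fundamental_matrix V t = (\<Sum>k. peano_baker_term V k t)"

text \<open>The inverse of the fundamental matrix is the transposed fundamental matrix of the adjoint
  equation \<open>x' = - V\<^sup>T x\<close>; this gives the derivative of the transition matrix in its second argument.\<close>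

definition fundamental_inverse :: "(real \<Rightarrow> real^'n^'n) \<Rightarrow> real \<Rightarrow> real^'n^'n" where
  "fundamental_inverse V t = transpose (fundamental_matrix (\<lambda>r. - transpose (V r)) t)"

lemma bounded_image_atLeastAtMost:
  "continuous_on UNIV (f :: real \<Rightarrow> 'a::real_normed_vector) \<Longrightarrow> bounded (f ` {a..b})"
  by (rule compact_imp_bounded, rule compact_continuous_image) (auto intro: continuous_on_subset)

context
  fixes V :: "real \<Rightarrow> real^'n^'n"
  assumes V: "continuous_on UNIV V"
begin

lemma continuous_on_mult_V: "continuous_on UNIV X \<Longrightarrow> continuous_on UNIV (\<lambda>r. V r ** X r)"
  by (rule bounded_bilinear.continuous_on[OF bounded_bilinear_matrix_matrix_mult V])

lemma continuous_on_peano_baker_term: "continuous_on UNIV (peano_baker_term V k)"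
proof (induction k)
  case (Suc k)
  show ?case
    unfolding peano_baker_term.simps
    by (rule continuous_at_imp_continuous_on) (auto intro!: has_vector_derivative_continuous
        has_vector_derivative_oriented_integral continuous_on_mult_V Suc)
qed simp

lemma norm_peano_baker_term_le:
  assumes B: "\<And>(X::real^'n^'n) (Y::real^'n^'n). norm (X ** Y) \<le> norm X * norm Y * B" "0 \<le> B"
    and M: "\<And>r. r \<in> {-T..T} \<Longrightarrow> norm (V r) \<le> M" "0 \<le> M"
    and t: "t \<in> {-T..T}"
  shows "norm (peano_baker_term V k t) \<le> norm (mat 1 :: real^'n^'n) * (B * M * \<bar>t\<bar>)^k / fact k"
  using t
proof (induction k arbitrary: t)
  case (Suc k)
  let ?c = "norm (mat 1 :: real^'n^'n) * (B * M)^Suc k / fact k"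
  have "norm (peano_baker_term V (Suc k) t) \<le> \<bar>oriented_integral (\<lambda>r. ?c * \<bar>r\<bar>^k) 0 t\<bar>"
    unfolding peano_baker_term.simps
  proof (rule norm_oriented_integral_le)
    fix r assume "r \<in> {min 0 t..max 0 t}"
    then have r: "r \<in> {-T..T}" using Suc.prems by auto
    have "norm (V r ** peano_baker_term V k r) \<le> norm (V r) * norm (peano_baker_term V k r) * B"
      by (rule B(1))
    also have "\<dots> \<le> M * (norm (mat 1 :: real^'n^'n) * (B * M * \<bar>r\<bar>)^k / fact k) * B"
      using M(1)[OF r] Suc.IH[OF r] B(2) M(2) by (intro mult_right_mono mult_mono) auto
    finally show "norm (V r ** peano_baker_term V k r) \<le> ?c * \<bar>r\<bar>^k"
      by (simp add: power_mult_distrib field_simps)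
  qed (auto intro!: continuous_intros continuous_on_mult_V continuous_on_peano_baker_term)
  also have "\<dots> = norm (mat 1 :: real^'n^'n) * (B * M * \<bar>t\<bar>)^Suc k / fact (Suc k)"
    using B M by (subst abs_oriented_integral_power) (simp_all add: power_mult_distrib field_simps)
  finally show ?case .
qed simp

lemma peano_baker_uniform_limit:
  "uniform_limit {-T..T} (\<lambda>n t. \<Sum>k<n. peano_baker_term V k t) (fundamental_matrix V) sequentially"
proof -
  obtain B where B: "\<And>(X::real^'n^'n) (Y::real^'n^'n). norm (X ** Y) \<le> norm X * norm Y * B" "0 < B"
    using bounded_bilinear.pos_bounded[OF bounded_bilinear_matrix_matrix_mult] by blast
  obtain M where "0 < M" "\<forall>x \<in> V ` {-T..T}. norm x \<le> M"
    using bounded_image_atLeastAtMost[OF V] unfolding bounded_pos by blast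
  then have M: "\<And>r. r \<in> {-T..T} \<Longrightarrow> norm (V r) \<le> M" "0 < M" by auto
  let ?N = "norm (mat 1 :: real^'n^'n)"
  have "uniform_limit {-T..T} (\<lambda>n t. \<Sum>k<n. peano_baker_term V k t)
      (\<lambda>t. \<Sum>k. peano_baker_term V k t) sequentially"
  proof (rule Weierstrass_m_test)
    fix k t assume t: "t \<in> {-T..T}"
    have "norm (peano_baker_term V k t) \<le> ?N * (B * M * \<bar>t\<bar>)^k / fact k"
      using B M t by (intro norm_peano_baker_term_le) auto
    also have "\<dots> \<le> ?N * (B * M * T)^k / fact k"
      using t B M by (intro divide_right_mono mult_left_mono power_mono) auto
    finally show "norm (peano_baker_term V k t) \<le> ?N * (B * M * T)^k / fact k" .
  next
    show "summable (\<lambda>k. ?N * (B * M * T)^k / fact k)"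
      using summable_mult[OF summable_exp_generic[of "B * M * T"], of ?N]
      by (simp add: divide_inverse ac_simps)
  qed
  then show ?thesis unfolding fundamental_matrix_def[abs_def] .
qed

lemma continuous_on_fundamental_matrix: "continuous_on UNIV (fundamental_matrix V)"
proof (rule continuous_at_imp_continuous_on, rule ballI)
  fix t :: real
  have "continuous_on {-(\<bar>t\<bar> + 1)..\<bar>t\<bar> + 1} (fundamental_matrix V)"
    by (rule uniform_limit_theorem[OF _ peano_baker_uniform_limit])
      (auto intro!: always_eventually continuous_on_sum
        intro: continuous_on_subset[OF continuous_on_peano_baker_term])
  then show "isCont (fundamental_matrix V) t"
    by (rule continuous_on_interior) auto
qed

lemma fundamental_matrix_eq:
  "fundamental_matrix V t = mat 1 + oriented_integral (\<lambda>r. V r ** fundamental_matrix V r) 0 t"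
proof -
  define S where "S n r = (\<Sum>k<n. peano_baker_term V k r)" for n r
  have S_cont: "continuous_on UNIV (S n)" for n
    unfolding S_def[abs_def] by (intro continuous_on_sum continuous_on_peano_baker_term)
  have S_limit: "uniform_limit {-\<bar>t\<bar>..\<bar>t\<bar>} S (fundamental_matrix V) sequentially"
    unfolding S_def[abs_def] by (rule peano_baker_uniform_limit)
  have S_Suc: "S (Suc n) t = mat 1 + oriented_integral (\<lambda>r. V r ** S n r) 0 t" for n
  proof -
    have "S (Suc n) t = mat 1 + (\<Sum>k<n. peano_baker_term V (Suc k) t)"
      unfolding S_def by (subst sum.lessThan_Suc_shift) simp
    also have "(\<Sum>k<n. peano_baker_term V (Suc k) t)
        = oriented_integral (\<lambda>r. \<Sum>k<n. V r ** peano_baker_term V k r) 0 t"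
      by (simp add: oriented_integral_sum continuous_on_mult_V continuous_on_peano_baker_term)
    finally show ?thesis
      by (simp add: S_def bounded_bilinear.sum_right[OF bounded_bilinear_matrix_matrix_mult])
  qed
  have "uniform_limit {min 0 t..max 0 t} (\<lambda>n r. V r ** S n r) (\<lambda>r. V r ** fundamental_matrix V r) sequentially"
    by (rule uniform_limit_on_subset[OF bounded_bilinear.bounded_uniform_limit[OF
          bounded_bilinear_matrix_matrix_mult uniform_limit_const S_limit
          bounded_image_atLeastAtMost[OF continuous_on_fundamental_matrix] bounded_image_atLeastAtMost[OF V]]])
      auto
  then have "(\<lambda>n. S (Suc n) t) \<longlonglongrightarrow> mat 1 + oriented_integral (\<lambda>r. V r ** fundamental_matrix V r) 0 t"
    unfolding S_Suc
    by (intro tendsto_add tendsto_const tendsto_oriented_integral_uniform_limit continuous_on_mult_V S_cont)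
  moreover have "(\<lambda>n. S (Suc n) t) \<longlonglongrightarrow> fundamental_matrix V t"
    using tendsto_uniform_limitI[OF S_limit, of t] by (intro LIMSEQ_Suc) (cases "0 \<le> t"; simp)
  ultimately show ?thesis using LIMSEQ_unique by blast
qed

lemma fundamental_matrix_0: "fundamental_matrix V 0 = mat 1"
  using fundamental_matrix_eq[of 0] by simp

lemma has_vector_derivative_fundamental_matrix:
  "(fundamental_matrix V has_vector_derivative V t ** fundamental_matrix V t) (at t)"
proof -
  have "((\<lambda>t. mat 1 + oriented_integral (\<lambda>r. V r ** fundamental_matrix V r) 0 t)
      has_vector_derivative 0 + V t ** fundamental_matrix V t) (at t)"
    by (intro has_vector_derivative_add has_vector_derivative_const has_vector_derivative_oriented_integral
        continuous_on_mult_V continuous_on_fundamental_matrix)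
  then show ?thesis by (simp flip: fundamental_matrix_eq)
qed

end

context
  fixes V :: "real \<Rightarrow> real^'n^'n"
  assumes V: "continuous_on UNIV V"
begin

lemma continuous_on_adjoint: "continuous_on UNIV (\<lambda>r. - transpose (V r))"
  by (intro continuous_intros bounded_linear.continuous_on[OF bounded_linear_transpose V])

lemma continuous_on_fundamental_inverse: "continuous_on UNIV (fundamental_inverse V)"
  unfolding fundamental_inverse_def[abs_def]
  by (rule bounded_linear.continuous_on[OF bounded_linear_transpose
        continuous_on_fundamental_matrix[OF continuous_on_adjoint]])

lemma fundamental_inverse_0: "fundamental_inverse V 0 = mat 1"
  by (simp add: fundamental_inverse_def fundamental_matrix_0[OF continuous_on_adjoint])

lemma has_vector_derivative_fundamental_inverse:
  "(fundamental_inverse V has_vector_derivative - (fundamental_inverse V t ** V t)) (at t)"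
  using bounded_linear.has_vector_derivative[OF bounded_linear_transpose
      has_vector_derivative_fundamental_matrix[OF continuous_on_adjoint]]
  by (simp add: fundamental_inverse_def[abs_def] matrix_transpose_mul transpose_minus matrix_mul_minus_right)

lemma fundamental_inverse_mult_solution:
  assumes X: "\<And>t. (X has_vector_derivative V t ** X t) (at t)"
  shows "fundamental_inverse V t ** X t = X 0"
proof -
  have "((\<lambda>u. fundamental_inverse V u ** X u) has_vector_derivative 0) (at x within UNIV)" for x
    using bounded_bilinear.has_vector_derivative[OF bounded_bilinear_matrix_matrix_mult
        has_vector_derivative_fundamental_inverse X]
    by (simp add: matrix_mul_assoc matrix_mul_minus_left)
  then obtain c where "\<And>x. fundamental_inverse V x ** X x = c"
    using has_vector_derivative_zero_constant[of UNIV "\<lambda>u. fundamental_inverse V u ** X u"] by auto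
  from this[of t] this[of 0] show ?thesis by (simp add: fundamental_inverse_0)
qed

lemma fundamental_inverse_mult_fundamental: "fundamental_inverse V t ** fundamental_matrix V t = mat 1"
  using fundamental_inverse_mult_solution[OF has_vector_derivative_fundamental_matrix[OF V]]
  by (simp add: fundamental_matrix_0[OF V])

lemma fundamental_mult_inverse: "fundamental_matrix V t ** fundamental_inverse V t = mat 1"
  using fundamental_inverse_mult_fundamental matrix_left_right_inverse by blast

lemma is_transition_fundamental:
  assumes "is_transition V Phi"
  shows "Phi t s = fundamental_matrix V t ** fundamental_inverse V s"
proof -
  have "((\<lambda>r. Phi r s) has_vector_derivative V t ** Phi t s) (at t)" for t
    using assms unfolding is_transition_def by blast
  then have "fundamental_inverse V u ** Phi u s = Phi 0 s" for u
    by (rule fundamental_inverse_mult_solution)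
  then have Phi_eq: "Phi u s = fundamental_matrix V u ** Phi 0 s" for u
    by (metis matrix_mul_assoc fundamental_mult_inverse matrix_mul_lid)
  have "Phi s s = mat 1"
    using assms unfolding is_transition_def by blast
  then have "fundamental_inverse V s = fundamental_inverse V s ** (fundamental_matrix V s ** Phi 0 s)"
    by (simp flip: Phi_eq)
  also have "\<dots> = Phi 0 s"
    by (simp add: matrix_mul_assoc fundamental_inverse_mult_fundamental)
  finally show ?thesis using Phi_eq[of t] by simp
qed

lemma transition_eq: "transition V t s = fundamental_matrix V t ** fundamental_inverse V s"
proof -
  have "is_transition V (\<lambda>t s. fundamental_matrix V t ** fundamental_inverse V s)"
    unfolding is_transition_def
  proof (intro allI conjI)
    fix s t
    show "fundamental_matrix V s ** fundamental_inverse V s = mat 1"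
      by (rule fundamental_mult_inverse)
    show "((\<lambda>r. fundamental_matrix V r ** fundamental_inverse V s) has_vector_derivative
        V t ** (fundamental_matrix V t ** fundamental_inverse V s)) (at t)"
      using bounded_linear.has_vector_derivative[OF bounded_bilinear.bounded_linear_left[OF
          bounded_bilinear_matrix_matrix_mult] has_vector_derivative_fundamental_matrix[OF V]]
      by (simp add: matrix_mul_assoc)
  qed
  then have "transition V = (\<lambda>t s. fundamental_matrix V t ** fundamental_inverse V s)"
    unfolding transition_def
    by (rule the_equality[where P="is_transition V"]) (auto intro!: ext simp: is_transition_fundamental)
  then show ?thesis by simp
qed

lemma transition_self [simp]: "transition V s s = mat 1"
  by (simp add: transition_eq fundamental_mult_inverse)

lemma has_vector_derivative_transition_1:
  "((\<lambda>t. transition V t s) has_vector_derivative V t ** transition V t s) (at t)"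
  using bounded_linear.has_vector_derivative[OF bounded_bilinear.bounded_linear_left[OF
        bounded_bilinear_matrix_matrix_mult] has_vector_derivative_fundamental_matrix[OF V]]
  by (simp add: transition_eq matrix_mul_assoc)

lemma has_vector_derivative_transition_2:
  "((\<lambda>s. transition V t s) has_vector_derivative - (transition V t s ** V s)) (at s)"
  using bounded_linear.has_vector_derivative[OF bounded_bilinear.bounded_linear_right[OF
        bounded_bilinear_matrix_matrix_mult] has_vector_derivative_fundamental_inverse]
  by (simp add: transition_eq matrix_mul_assoc matrix_mul_minus_right)

lemma continuous_on_transition_1: "continuous_on UNIV (\<lambda>t. transition V t s)"
  unfolding transition_eq
  by (rule bounded_linear.continuous_on[OF bounded_bilinear.bounded_linear_left[OF
        bounded_bilinear_matrix_matrix_mult] continuous_on_fundamental_matrix[OF V]])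

lemma continuous_on_transition_2: "continuous_on UNIV (\<lambda>s. transition V t s)"
  unfolding transition_eq
  by (rule bounded_linear.continuous_on[OF bounded_bilinear.bounded_linear_right[OF
        bounded_bilinear_matrix_matrix_mult] continuous_on_fundamental_inverse])

lemma continuous_on_transition_apply: "continuous_on UNIV (\<lambda>t. transition V t s *v x)"
  by (rule bounded_linear.continuous_on[OF bounded_bilinear.bounded_linear_left[OF
        bounded_bilinear_matrix_vector_mult] continuous_on_transition_1])

end

section \<open>Variation of constants and Gronwall's inequality\<close>

lemma continuous_on_output_injection:
  fixes X :: "real \<Rightarrow> real^'n^'n" and Kp :: "real \<Rightarrow> real^'m^'n" and C :: "real \<Rightarrow> real^'n^'m"
  assumes "continuous_on UNIV X" "continuous_on UNIV Kp" "continuous_on UNIV C"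
  shows "continuous_on UNIV (\<lambda>t. X t - Kp t ** C t)"
  by (intro continuous_intros bounded_bilinear.continuous_on[OF bounded_bilinear_matrix_matrix_mult assms(2,3)] assms(1))

lemma transition_variation_of_constants:
  fixes X :: "real \<Rightarrow> real^'n^'n" and Kp :: "real \<Rightarrow> real^'m^'n" and C :: "real \<Rightarrow> real^'n^'m"
  assumes X: "continuous_on UNIV X" and Kp: "continuous_on UNIV Kp" and C: "continuous_on UNIV C"
    and Y: "Y = (\<lambda>t. X t - Kp t ** C t)"
  shows "transition Y s t = transition X s t
    + oriented_integral (\<lambda>r. - (transition X s r ** (Kp r ** C r) ** transition Y r t)) t s"
proof -
  have Y_cont: "continuous_on UNIV Y"
    unfolding Y by (rule continuous_on_output_injection[OF X Kp C])
  let ?H = "\<lambda>r. transition X s r ** transition Y r t"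
  let ?h = "\<lambda>r. - (transition X s r ** (Kp r ** C r) ** transition Y r t)"
  have "(?H has_vector_derivative ?h r) (at r)" for r
    using bounded_bilinear.has_vector_derivative[OF bounded_bilinear_matrix_matrix_mult
        has_vector_derivative_transition_2[OF X] has_vector_derivative_transition_1[OF Y_cont]]
    by (simp add: Y matrix_diff_rdistrib matrix_diff_ldistrib matrix_mul_minus_left matrix_mul_assoc)
  moreover have "continuous_on UNIV ?h"
    by (intro continuous_intros bounded_bilinear.continuous_on[OF bounded_bilinear_matrix_matrix_mult]
        continuous_on_transition_2[OF X] continuous_on_transition_1[OF Y_cont] Kp C)
  ultimately have "oriented_integral ?h t s = ?H s - ?H t"
    by (rule oriented_integral_ftc)
  then show ?thesis by (simp add: transition_self[OF X] transition_self[OF Y_cont])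
qed

lemma transition_variation_of_constants_apply:
  fixes X :: "real \<Rightarrow> real^'n^'n" and Kp :: "real \<Rightarrow> real^'m^'n" and C :: "real \<Rightarrow> real^'n^'m"
    and D :: "real^'n^'k"
  assumes X: "continuous_on UNIV X" and Kp: "continuous_on UNIV Kp" and C: "continuous_on UNIV C"
    and Y: "Y = (\<lambda>t. X t - Kp t ** C t)"
  shows "D *v (transition Y s t *v x) = D *v (transition X s t *v x)
    + oriented_integral (\<lambda>r. - (D *v (transition X s r *v (Kp r *v (C r *v (transition Y r t *v x)))))) t s"
proof -
  have Y_cont: "continuous_on UNIV Y"
    unfolding Y by (rule continuous_on_output_injection[OF X Kp C])
  define L where "L M = D *v (M *v x)" for M :: "real^'n^'n"
  have L: "bounded_linear L"
    unfolding L_def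
    by (intro bounded_linear_compose[OF bounded_bilinear.bounded_linear_right[OF bounded_bilinear_matrix_vector_mult]]
        bounded_bilinear.bounded_linear_left[OF bounded_bilinear_matrix_vector_mult])
  let ?h = "\<lambda>r. - (transition X s r ** (Kp r ** C r) ** transition Y r t)"
  have "continuous_on UNIV ?h"
    by (intro continuous_intros bounded_bilinear.continuous_on[OF bounded_bilinear_matrix_matrix_mult]
        continuous_on_transition_2[OF X] continuous_on_transition_1[OF Y_cont] Kp C)
  then have "L (oriented_integral ?h t s) = oriented_integral (\<lambda>r. L (?h r)) t s"
    by (rule oriented_integral_linear[OF L, symmetric])
  then have "L (transition Y s t) = L (transition X s t) + oriented_integral (\<lambda>r. L (?h r)) t s"
    using transition_variation_of_constants[OF X Kp C Y, of s t] by (simp add: linear_simps[OF L])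
  then show ?thesis
    by (simp add: L_def matrix_vector_mult_minus_left matrix_vector_mult_minus_right
        matrix_vector_mul_assoc matrix_mul_assoc)
qed

lemma gronwall_forward:
  fixes u :: "real \<Rightarrow> real"
  assumes u: "continuous_on UNIV u" and "\<alpha> \<ge> 0" "\<beta> > 0"
    and u_le: "\<And>r. t \<le> r \<Longrightarrow> u r \<le> \<alpha> + \<beta> * oriented_integral u t r"
    and "t \<le> s"
  shows "u s \<le> \<alpha> * exp (\<beta> * (s - t))"
proof -
  define D where "D \<tau> = exp (- \<beta> * \<tau>) * (oriented_integral u t \<tau> + \<alpha> / \<beta>)" for \<tau>
  have W: "(oriented_integral u t has_real_derivative u \<tau>) (at \<tau>)" for \<tau>
    using has_vector_derivative_oriented_integral[OF u]
    by (simp add: has_real_derivative_iff_has_vector_derivative)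
  have "D s \<le> D t"
  proof (rule DERIV_nonpos_imp_nonincreasing[OF \<open>t \<le> s\<close>])
    fix \<tau> assume "t \<le> \<tau>"
    have "(D has_real_derivative exp (- \<beta> * \<tau>) * u \<tau>
        + (- \<beta>) * exp (- \<beta> * \<tau>) * (oriented_integral u t \<tau> + \<alpha> / \<beta>)) (at \<tau>)"
      unfolding D_def[abs_def] by (rule derivative_eq_intros W refl | simp)+
    moreover have "exp (- \<beta> * \<tau>) * u \<tau> + (- \<beta>) * exp (- \<beta> * \<tau>) * (oriented_integral u t \<tau> + \<alpha> / \<beta>)
        = exp (- \<beta> * \<tau>) * (u \<tau> - \<alpha> - \<beta> * oriented_integral u t \<tau>)"
      using \<open>\<beta> > 0\<close> by (simp add: field_simps)
    moreover have "u \<tau> - \<alpha> - \<beta> * oriented_integral u t \<tau> \<le> 0"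
      using u_le[OF \<open>t \<le> \<tau>\<close>] by simp
    ultimately show "\<exists>y. (D has_real_derivative y) (at \<tau>) \<and> y \<le> 0"
      by (metis mult_nonneg_nonpos exp_ge_zero)
  qed
  then have "exp (\<beta> * s) * (exp (- \<beta> * s) * (oriented_integral u t s + \<alpha> / \<beta>))
      \<le> exp (\<beta> * s) * (exp (- \<beta> * t) * (\<alpha> / \<beta>))"
    by (intro mult_left_mono) (simp_all add: D_def)
  then have "oriented_integral u t s \<le> exp (\<beta> * (s - t)) * (\<alpha> / \<beta>) - \<alpha> / \<beta>"
    by (simp add: algebra_simps flip: exp_add)
  then have "\<alpha> + \<beta> * oriented_integral u t s \<le> \<alpha> * exp (\<beta> * (s - t))"
    using \<open>\<beta> > 0\<close> by (simp add: field_simps)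
  then show ?thesis using u_le[OF \<open>t \<le> s\<close>] by linarith
qed

lemma gronwall:
  fixes u :: "real \<Rightarrow> real"
  assumes u: "continuous_on UNIV u" and u_nonneg: "\<And>r. 0 \<le> u r" and "\<alpha> \<ge> 0" "\<beta> > 0"
    and u_le: "\<And>r. u r \<le> \<alpha> + \<beta> * \<bar>oriented_integral u t r\<bar>"
  shows "u s \<le> \<alpha> * exp (\<beta> * \<bar>s - t\<bar>)"
proof (cases "t \<le> s")
  case True
  have "u r \<le> \<alpha> + \<beta> * oriented_integral u t r" if "t \<le> r" for r
    using u_le[of r] oriented_integral_nonneg[OF u that u_nonneg] by simp
  with True show ?thesis using gronwall_forward[OF u \<open>\<alpha> \<ge> 0\<close> \<open>\<beta> > 0\<close>] by simp
next
  case False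
  define v where "v = (\<lambda>r. u (- r))"
  have v: "continuous_on UNIV v"
    unfolding v_def by (intro continuous_on_compose2[OF u] continuous_intros) auto
  have "v r \<le> \<alpha> + \<beta> * oriented_integral v (- t) r" if "- t \<le> r" for r
  proof -
    have "oriented_integral u t (- r) = - oriented_integral v (- t) r"
      using oriented_integral_reflect[of u t "- r"] by (simp add: v_def)
    moreover have "0 \<le> oriented_integral v (- t) r"
      using that by (intro oriented_integral_nonneg[OF v]) (auto simp: v_def u_nonneg)
    ultimately show ?thesis using u_le[of "- r"] by (simp add: v_def)
  qed
  then have "v (- s) \<le> \<alpha> * exp (\<beta> * (- s - - t))"
    using False by (intro gronwall_forward[OF v \<open>\<alpha> \<ge> 0\<close> \<open>\<beta> > 0\<close>]) auto
  then show ?thesis using False by (simp add: v_def)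
qed

lemma Cauchy_Schwarz_ineq_integral:
  fixes f :: "real \<Rightarrow> real"
  assumes f: "continuous_on UNIV f" and "p \<le> q"
  shows "(integral {p..q} f)^2 \<le> (q - p) * integral {p..q} (\<lambda>s. (f s)^2)"
proof -
  define J where "J = integral {p..q} f"
  define I where "I = integral {p..q} (\<lambda>s. (f s)^2)"
  have quadratic: "2 * l * J \<le> l^2 * (q - p) + I" for l
  proof -
    have "integral {p..q} (\<lambda>s. 2 * l * f s) \<le> integral {p..q} (\<lambda>s. l^2 + (f s)^2)"
      by (intro Henstock_Kurzweil_Integration.integral_le integrable_on_continuous_UNIV continuous_intros f)
        (simp add: sum_squares_bound)
    moreover have "integral {p..q} (\<lambda>s. l^2 + (f s)^2) = l^2 * (q - p) + I"
      using \<open>p \<le> q\<close> unfolding I_def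
      by (subst integral_add) (auto intro!: integrable_on_continuous_UNIV continuous_intros f)
    ultimately show ?thesis by (simp add: J_def)
  qed
  show ?thesis
  proof (cases "p = q")
    case False
    define d where "d = q - p"
    with False \<open>p \<le> q\<close> have d: "d > 0" by simp
    have "2 * (J / d) * J \<le> (J / d)^2 * d + I"
      unfolding d_def by (rule quadratic)
    moreover have "(J / d)^2 * d = J^2 / d" "2 * (J / d) * J = 2 * (J^2 / d)"
      using d by (simp_all add: power2_eq_square)
    ultimately have "J^2 / d \<le> I" by linarith
    then show ?thesis using d by (simp add: J_def I_def d_def pos_divide_le_eq mult.commute)
  qed simp
qed

section \<open>Observability Gramians\<close>

lemma inner_transpose_mult_self: "x \<bullet> ((transpose M ** M) *v x) = (norm ((M::real^'n^'m) *v x))^2"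
proof -
  have "x \<bullet> ((transpose M ** M) *v x) = ((M *v x) v* M) \<bullet> x"
    by (simp add: matrix_vector_mul_assoc[symmetric] inner_commute)
  also have "\<dots> = (M *v x) \<bullet> (M *v x)" by (rule dot_lmul_matrix)
  finally show ?thesis by (simp add: power2_norm_eq_inner)
qed

lemma inner_integral_transpose_mult_self:
  fixes F :: "real \<Rightarrow> real^'n^'m"
  assumes F: "continuous_on UNIV F"
  shows "x \<bullet> (integral {p..q} (\<lambda>s. transpose (F s) ** F s) *v x) = integral {p..q} (\<lambda>s. (norm (F s *v x))^2)"
proof -
  define L where "L M = x \<bullet> (M *v x)" for M :: "real^'n^'n"
  have L: "bounded_linear L" unfolding L_def
    by (intro bounded_linear_compose[OF bounded_linear_inner_right]
        bounded_bilinear.bounded_linear_left[OF bounded_bilinear_matrix_vector_mult])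
  have "continuous_on UNIV (\<lambda>s. transpose (F s) ** F s)"
    by (intro bounded_bilinear.continuous_on[OF bounded_bilinear_matrix_matrix_mult] F
        bounded_linear.continuous_on[OF bounded_linear_transpose])
  then have "L (integral {p..q} (\<lambda>s. transpose (F s) ** F s)) = integral {p..q} (\<lambda>s. L (transpose (F s) ** F s))"
    using integral_linear[OF integrable_on_continuous_UNIV L] by (simp add: o_def)
  then show ?thesis by (simp add: L_def inner_transpose_mult_self)
qed

lemma inner_gram_M:
  assumes V: "continuous_on UNIV V" and C: "continuous_on UNIV C"
  shows "x \<bullet> (gram_M V C p q *v x) = integral {p..q} (\<lambda>s. (norm (C s *v (transition V s p *v x)))^2)"
proof -
  have "gram_M V C p q = integral {p..q} (\<lambda>s. transpose (C s ** transition V s p) ** (C s ** transition V s p))"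
    by (simp add: gram_M_def matrix_transpose_mul matrix_mul_assoc)
  then show ?thesis
    by (simp add: inner_integral_transpose_mult_self matrix_vector_mul_assoc
        bounded_bilinear.continuous_on[OF bounded_bilinear_matrix_matrix_mult C continuous_on_transition_1[OF V]])
qed

lemma inner_gram_N:
  assumes V: "continuous_on UNIV V" and C: "continuous_on UNIV C"
  shows "x \<bullet> (gram_N V C p q *v x) = integral {p..q} (\<lambda>s. (norm (C s *v (transition V s q *v x)))^2)"
proof -
  have "gram_N V C p q = integral {p..q} (\<lambda>s. transpose (C s ** transition V s q) ** (C s ** transition V s q))"
    by (simp add: gram_N_def matrix_transpose_mul matrix_mul_assoc)
  then show ?thesis
    by (simp add: inner_integral_transpose_mult_self matrix_vector_mul_assoc
        bounded_bilinear.continuous_on[OF bounded_bilinear_matrix_matrix_mult C continuous_on_transition_1[OF V]])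
qed

lemma loewner_le_scaleR_iff: "loewner_le P (c *\<^sub>R Q) \<longleftrightarrow> (\<forall>x. x \<bullet> (P *v x) \<le> c * (x \<bullet> (Q *v x)))"
  by (simp add: loewner_le_def flip: scaleR_matrix_vector_assoc)

lemma loewner_le_scaled_bounds:
  assumes "loewner_le (e *\<^sub>R mat 1) P" "loewner_le P (E *\<^sub>R mat 1)"
    and "loewner_le P (c *\<^sub>R Q)" "loewner_le Q (c *\<^sub>R P)" "0 < c"
  shows "loewner_le ((e / c) *\<^sub>R mat 1) Q" "loewner_le Q ((c * E) *\<^sub>R mat 1)"
proof -
  have "e / c * (x \<bullet> x) \<le> x \<bullet> (Q *v x) \<and> x \<bullet> (Q *v x) \<le> c * E * (x \<bullet> x)" for x
  proof -
    have "e * (x \<bullet> x) \<le> x \<bullet> (P *v x)" "x \<bullet> (P *v x) \<le> E * (x \<bullet> x)"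
      using assms(1,2) by (auto simp: loewner_le_def simp flip: scaleR_matrix_vector_assoc)
    moreover have "x \<bullet> (P *v x) \<le> c * (x \<bullet> (Q *v x))" "x \<bullet> (Q *v x) \<le> c * (x \<bullet> (P *v x))"
      using assms(3,4) by (auto simp: loewner_le_scaleR_iff)
    ultimately show ?thesis
      using \<open>0 < c\<close> by (auto simp: field_simps mult_left_mono intro: order_trans)
  qed
  then show "loewner_le ((e / c) *\<^sub>R mat 1) Q" "loewner_le Q ((c * E) *\<^sub>R mat 1)"
    by (simp_all add: loewner_le_def flip: scaleR_matrix_vector_assoc)
qed

lemma gramian_window_bounds_transfer:
  fixes M N M' N' :: "real \<Rightarrow> real^'n^'n"
  assumes "\<exists>\<sigma>0>0. \<forall>\<sigma>\<ge>\<sigma>0. loewner_le (e0 \<sigma> *\<^sub>R mat 1) (M \<sigma>) \<and> loewner_le (M \<sigma>) (e1 \<sigma> *\<^sub>R mat 1)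
      \<and> loewner_le (f0 \<sigma> *\<^sub>R mat 1) (N \<sigma>) \<and> loewner_le (N \<sigma>) (f1 \<sigma> *\<^sub>R mat 1)"
    and "\<And>\<sigma>. 0 \<le> \<sigma> \<Longrightarrow> loewner_le (M \<sigma>) (c \<sigma> *\<^sub>R M' \<sigma>) \<and> loewner_le (N \<sigma>) (c \<sigma> *\<^sub>R N' \<sigma>)"
    and "\<And>\<sigma>. 0 \<le> \<sigma> \<Longrightarrow> loewner_le (M' \<sigma>) (c \<sigma> *\<^sub>R M \<sigma>) \<and> loewner_le (N' \<sigma>) (c \<sigma> *\<^sub>R N \<sigma>)"
    and "\<And>\<sigma>. 0 < c \<sigma>"
  shows "\<exists>\<sigma>0>0. \<forall>\<sigma>\<ge>\<sigma>0. loewner_le ((e0 \<sigma> / c \<sigma>) *\<^sub>R mat 1) (M' \<sigma>) \<and> loewner_le (M' \<sigma>) ((c \<sigma> * e1 \<sigma>) *\<^sub>R mat 1)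
      \<and> loewner_le ((f0 \<sigma> / c \<sigma>) *\<^sub>R mat 1) (N' \<sigma>) \<and> loewner_le (N' \<sigma>) ((c \<sigma> * f1 \<sigma>) *\<^sub>R mat 1)"
proof -
  obtain \<sigma>0 where "\<sigma>0 > 0" and bounds: "\<And>\<sigma>. \<sigma>0 \<le> \<sigma> \<Longrightarrow> loewner_le (e0 \<sigma> *\<^sub>R mat 1) (M \<sigma>)
      \<and> loewner_le (M \<sigma>) (e1 \<sigma> *\<^sub>R mat 1) \<and> loewner_le (f0 \<sigma> *\<^sub>R mat 1) (N \<sigma>) \<and> loewner_le (N \<sigma>) (f1 \<sigma> *\<^sub>R mat 1)"
    using assms(1) by blast
  have "loewner_le ((e0 \<sigma> / c \<sigma>) *\<^sub>R mat 1) (M' \<sigma>) \<and> loewner_le (M' \<sigma>) ((c \<sigma> * e1 \<sigma>) *\<^sub>R mat 1)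
      \<and> loewner_le ((f0 \<sigma> / c \<sigma>) *\<^sub>R mat 1) (N' \<sigma>) \<and> loewner_le (N' \<sigma>) ((c \<sigma> * f1 \<sigma>) *\<^sub>R mat 1)"
    if "\<sigma>0 \<le> \<sigma>" for \<sigma>
  proof -
    have "0 \<le> \<sigma>" using that \<open>\<sigma>0 > 0\<close> by simp
    then show ?thesis
      using bounds[OF that] assms(2,3)[OF \<open>0 \<le> \<sigma>\<close>] assms(4)[of \<sigma>]
      by (elim conjE) (intro conjI; rule loewner_le_scaled_bounds; assumption)
  qed
  then show ?thesis using \<open>\<sigma>0 > 0\<close> by blast
qed

lemma NUCO_transfer:
  fixes X Y :: "real \<Rightarrow> real^'n^'n" and C :: "real \<Rightarrow> real^'n^'m"
  assumes c_pos: "\<And>\<sigma>. 0 < c \<sigma>"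
    and XY: "\<And>t \<sigma>. 0 \<le> \<sigma> \<Longrightarrow> loewner_le (gram_M X C t (t + \<sigma>)) (c \<sigma> *\<^sub>R gram_M Y C t (t + \<sigma>))
        \<and> loewner_le (gram_N X C t (t + \<sigma>)) (c \<sigma> *\<^sub>R gram_N Y C t (t + \<sigma>))"
    and YX: "\<And>t \<sigma>. 0 \<le> \<sigma> \<Longrightarrow> loewner_le (gram_M Y C t (t + \<sigma>)) (c \<sigma> *\<^sub>R gram_M X C t (t + \<sigma>))
        \<and> loewner_le (gram_N Y C t (t + \<sigma>)) (c \<sigma> *\<^sub>R gram_N X C t (t + \<sigma>))"
    and "NUCO X C"
  shows "NUCO Y C"
proof -
  obtain \<nu>0 \<nu>1 \<nu>0' \<nu>1' and \<theta>0 \<rho>0 \<theta>1 \<rho>1 :: "real \<Rightarrow> real" where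
    nonneg: "\<nu>0 \<ge> 0" "\<nu>1 \<ge> 0" "\<nu>0' \<ge> 0" "\<nu>1' \<ge> 0"
    and pos: "\<forall>\<sigma>\<ge>0. \<theta>0 \<sigma> > 0 \<and> \<rho>0 \<sigma> > 0 \<and> \<theta>1 \<sigma> > 0 \<and> \<rho>1 \<sigma> > 0"
    and bounds: "\<And>t. \<exists>\<sigma>0>0. \<forall>\<sigma>\<ge>\<sigma>0.
          loewner_le ((exp (-2 * \<nu>0 * \<bar>t\<bar>) * \<theta>0 \<sigma>) *\<^sub>R mat 1) (gram_M X C t (t + \<sigma>)) \<and>
          loewner_le (gram_M X C t (t + \<sigma>)) ((exp (2 * \<nu>1 * \<bar>t\<bar>) * \<theta>1 \<sigma>) *\<^sub>R mat 1) \<and>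
          loewner_le ((exp (-2 * \<nu>0' * \<bar>t\<bar>) * \<rho>0 \<sigma>) *\<^sub>R mat 1) (gram_N X C t (t + \<sigma>)) \<and>
          loewner_le (gram_N X C t (t + \<sigma>)) ((exp (2 * \<nu>1' * \<bar>t\<bar>) * \<rho>1 \<sigma>) *\<^sub>R mat 1)"
    using \<open>NUCO X C\<close> unfolding NUCO_def by blast
  show ?thesis
    unfolding NUCO_def
    by (rule exI[of _ \<nu>0], rule exI[of _ \<nu>1], rule exI[of _ \<nu>0'], rule exI[of _ \<nu>1'],
        rule exI[of _ "\<lambda>\<sigma>. \<theta>0 \<sigma> / c \<sigma>"], rule exI[of _ "\<lambda>\<sigma>. \<rho>0 \<sigma> / c \<sigma>"],
        rule exI[of _ "\<lambda>\<sigma>. c \<sigma> * \<theta>1 \<sigma>"], rule exI[of _ "\<lambda>\<sigma>. c \<sigma> * \<rho>1 \<sigma>"],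
        intro conjI allI nonneg)
      (use pos c_pos gramian_window_bounds_transfer[OF bounds XY YX c_pos] in \<open>auto simp: ac_simps\<close>)
qed

section \<open>Output injection with decaying gain\<close>

lemma nonuniform_bounded_growth_mono:
  assumes "nonuniform_bounded_growth V K0 a \<eta>" "a \<le> a'" "0 \<le> K0"
  shows "nonuniform_bounded_growth V K0 a' \<eta>"
  unfolding nonuniform_bounded_growth_def
proof (intro allI)
  fix t \<tau>
  have "mnorm (transition V t \<tau>) \<le> K0 * exp (\<eta> * \<bar>\<tau>\<bar>) * exp (a * \<bar>t - \<tau>\<bar>)"
    using assms(1) by (simp add: nonuniform_bounded_growth_def)
  also have "\<dots> \<le> K0 * exp (\<eta> * \<bar>\<tau>\<bar>) * exp (a' * \<bar>t - \<tau>\<bar>)"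
    using assms(2,3) by (intro mult_left_mono mult_nonneg_nonneg) (auto intro: mult_right_mono)
  finally show "mnorm (transition V t \<tau>) \<le> K0 * exp (\<eta> * \<bar>\<tau>\<bar>) * exp (a' * \<bar>t - \<tau>\<bar>)" .
qed

text \<open>The gain is not a parameter of the locale: the results are applied to \<open>K\<close> and to \<open>- K\<close>.\<close>

locale output_injection_bounds =
  fixes C :: "real \<Rightarrow> real^'n^'m" and K0 \<epsilon> \<K> \<C> \<delta> \<gamma> :: real
  assumes continuous_C: "continuous_on UNIV C"
    and K0_pos: "0 < K0" and gain_pos: "0 < \<K>" and output_pos: "0 < \<C>" and \<gamma>_nonneg: "0 \<le> \<gamma>"
    and mnorm_C_le: "\<And>z. mnorm (C z) \<le> \<C> * exp (\<gamma> * \<bar>z\<bar>)"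
    and decay_dominates: "\<gamma> + \<epsilon> \<le> \<delta>"
begin

lemma norm_transition_injection_le:
  assumes growth: "nonuniform_bounded_growth X K0 a \<epsilon>"
    and mnorm_Kp_le: "\<And>z. mnorm (Kp z) \<le> \<K> * exp (- \<delta> * \<bar>z\<bar>)"
  shows "norm (transition X s r *v (Kp r *v (C r *v w))) \<le> K0 * \<K> * \<C> * exp (a * \<bar>s - r\<bar>) * norm w"
proof -
  have "norm (transition X s r *v (Kp r *v (C r *v w)))
      \<le> (K0 * exp (\<epsilon> * \<bar>r\<bar>) * exp (a * \<bar>s - r\<bar>)) * (\<K> * exp (- \<delta> * \<bar>r\<bar>)) * (\<C> * exp (\<gamma> * \<bar>r\<bar>)) * norm w"
    using growth by (intro norm_matrix_vector_le3 mnorm_Kp_le mnorm_C_le)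
      (simp add: nonuniform_bounded_growth_def)
  also have "\<dots> = K0 * \<K> * \<C> * exp ((\<gamma> + \<epsilon> - \<delta>) * \<bar>r\<bar>) * exp (a * \<bar>s - r\<bar>) * norm w"
    by (simp add: algebra_simps flip: exp_add)
  also have "\<dots> \<le> K0 * \<K> * \<C> * 1 * exp (a * \<bar>s - r\<bar>) * norm w"
    using decay_dominates K0_pos gain_pos output_pos
    by (intro mult_right_mono mult_left_mono) (auto simp: mult_nonpos_nonneg)
  finally show ?thesis by simp
qed

lemma norm_output_kernel_le:
  assumes growth: "nonuniform_bounded_growth X K0 a \<epsilon>" and "0 \<le> a"
    and mnorm_Kp_le: "\<And>z. mnorm (Kp z) \<le> \<K> * exp (- \<delta> * \<bar>z\<bar>)"
    and "\<bar>s - r\<bar> \<le> \<sigma>"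
  shows "norm (C s *v (transition X s r *v (Kp r *v v))) \<le> \<C> * K0 * \<K> * exp ((\<gamma> + a) * \<sigma>) * norm v"
proof -
  have "norm (C s *v (transition X s r *v (Kp r *v v)))
      \<le> (\<C> * exp (\<gamma> * \<bar>s\<bar>)) * (K0 * exp (\<epsilon> * \<bar>r\<bar>) * exp (a * \<bar>s - r\<bar>)) * (\<K> * exp (- \<delta> * \<bar>r\<bar>)) * norm v"
    using growth by (intro norm_matrix_vector_le3 mnorm_Kp_le mnorm_C_le)
      (simp add: nonuniform_bounded_growth_def)
  also have "\<dots> = \<C> * K0 * \<K> * exp (\<gamma> * \<bar>s\<bar> + \<epsilon> * \<bar>r\<bar> + a * \<bar>s - r\<bar> - \<delta> * \<bar>r\<bar>) * norm v"
    by (simp add: exp_add exp_diff exp_minus field_simps)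
  also have "\<dots> \<le> \<C> * K0 * \<K> * exp ((\<gamma> + a) * \<sigma>) * norm v"
  proof -
    have "\<gamma> * \<bar>s\<bar> \<le> \<gamma> * \<bar>r\<bar> + \<gamma> * \<sigma>"
      using \<gamma>_nonneg \<open>\<bar>s - r\<bar> \<le> \<sigma>\<close> by (simp add: mult_left_mono flip: distrib_left)
    moreover have "a * \<bar>s - r\<bar> \<le> a * \<sigma>"
      using \<open>\<bar>s - r\<bar> \<le> \<sigma>\<close> \<open>0 \<le> a\<close> by (rule mult_left_mono)
    moreover have "(\<gamma> + \<epsilon> - \<delta>) * \<bar>r\<bar> \<le> 0"
      using decay_dominates by (simp add: mult_nonpos_nonneg)
    ultimately have "\<gamma> * \<bar>s\<bar> + \<epsilon> * \<bar>r\<bar> + a * \<bar>s - r\<bar> - \<delta> * \<bar>r\<bar> \<le> (\<gamma> + a) * \<sigma>"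
      by (simp add: algebra_simps)
    then show ?thesis
      using K0_pos gain_pos output_pos by (intro mult_right_mono mult_left_mono) auto
  qed
  finally show ?thesis .
qed

lemma norm_injection_integral_le:
  fixes X :: "real \<Rightarrow> real^'n^'n" and Kp :: "real \<Rightarrow> real^'m^'n" and w :: "real \<Rightarrow> real^'n"
  assumes X: "continuous_on UNIV X" and Kp: "continuous_on UNIV Kp" and w: "continuous_on UNIV w"
    and mnorm_Kp_le: "\<And>z. mnorm (Kp z) \<le> \<K> * exp (- \<delta> * \<bar>z\<bar>)"
    and growth: "nonuniform_bounded_growth X K0 a \<epsilon>"
  shows "norm (oriented_integral (\<lambda>r. - (transition X s r *v (Kp r *v (C r *v w r)))) \<tau> s)
    \<le> K0 * \<K> * \<C> * exp (a * \<bar>s - \<tau>\<bar>) * \<bar>oriented_integral (\<lambda>r. exp (- a * \<bar>r - \<tau>\<bar>) * norm (w r)) \<tau> s\<bar>"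
proof -
  let ?u = "\<lambda>r. exp (- a * \<bar>r - \<tau>\<bar>) * norm (w r)"
  have u: "continuous_on UNIV ?u" by (intro continuous_intros w)
  have "norm (oriented_integral (\<lambda>r. - (transition X s r *v (Kp r *v (C r *v w r)))) \<tau> s)
      \<le> \<bar>oriented_integral (\<lambda>r. K0 * \<K> * \<C> * exp (a * \<bar>s - \<tau>\<bar>) * ?u r) \<tau> s\<bar>"
  proof (rule norm_oriented_integral_le)
    show "continuous_on UNIV (\<lambda>r. - (transition X s r *v (Kp r *v (C r *v w r))))"
      by (intro continuous_intros bounded_bilinear.continuous_on[OF bounded_bilinear_matrix_vector_mult]
          continuous_on_transition_2[OF X] Kp continuous_C w)
    fix r assume "r \<in> {min \<tau> s..max \<tau> s}"
    then have "\<bar>s - \<tau>\<bar> = \<bar>s - r\<bar> + \<bar>r - \<tau>\<bar>"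
      by (cases "\<tau> \<le> s") (auto simp: min_def max_def abs_if)
    then have "exp (a * \<bar>s - r\<bar>) = exp (a * \<bar>s - \<tau>\<bar>) * exp (- a * \<bar>r - \<tau>\<bar>)"
      by (simp add: algebra_simps flip: exp_add)
    then show "norm (- (transition X s r *v (Kp r *v (C r *v w r)))) \<le> K0 * \<K> * \<C> * exp (a * \<bar>s - \<tau>\<bar>) * ?u r"
      using norm_transition_injection_le[OF growth mnorm_Kp_le, of s r "w r"] by (simp add: mult_ac)
  qed (intro continuous_intros u)
  also have "\<dots> = K0 * \<K> * \<C> * exp (a * \<bar>s - \<tau>\<bar>) * \<bar>oriented_integral ?u \<tau> s\<bar>"
    using K0_pos gain_pos output_pos oriented_integral_linear[OF bounded_linear_mult_right u]
    by (simp add: abs_mult)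
  finally show ?thesis .
qed

lemma weighted_injected_transition_le:
  fixes X :: "real \<Rightarrow> real^'n^'n" and Kp :: "real \<Rightarrow> real^'m^'n" and \<tau> :: real and x :: "real^'n"
  assumes X: "continuous_on UNIV X" and Kp: "continuous_on UNIV Kp"
    and mnorm_Kp_le: "\<And>z. mnorm (Kp z) \<le> \<K> * exp (- \<delta> * \<bar>z\<bar>)"
    and growth: "nonuniform_bounded_growth X K0 a \<epsilon>"
  defines "u \<equiv> \<lambda>r. exp (- a * \<bar>r - \<tau>\<bar>) * norm (transition (\<lambda>t. X t - Kp t ** C t) r \<tau> *v x)"
  shows "u s \<le> K0 * exp (\<epsilon> * \<bar>\<tau>\<bar>) * norm x + K0 * \<K> * \<C> * \<bar>oriented_integral u \<tau> s\<bar>"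
proof -
  define Y where "Y = (\<lambda>t. X t - Kp t ** C t)"
  let ?h = "\<lambda>r. - (transition X s r *v (Kp r *v (C r *v (transition Y r \<tau> *v x))))"
  let ?\<beta> = "K0 * \<K> * \<C>"
  have "continuous_on UNIV Y"
    unfolding Y_def by (rule continuous_on_output_injection[OF X Kp continuous_C])
  from norm_injection_integral_le[OF X Kp continuous_on_transition_apply[OF this] mnorm_Kp_le growth]
  have perturbation_le: "norm (oriented_integral ?h \<tau> s) \<le> ?\<beta> * exp (a * \<bar>s - \<tau>\<bar>) * \<bar>oriented_integral u \<tau> s\<bar>"
    by (simp add: u_def Y_def)
  have unperturbed_le:
    "norm (transition X s \<tau> *v x) \<le> K0 * exp (\<epsilon> * \<bar>\<tau>\<bar>) * exp (a * \<bar>s - \<tau>\<bar>) * norm x"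
    using growth by (intro norm_matrix_vector_le) (simp add: nonuniform_bounded_growth_def)
  have "transition Y s \<tau> *v x = transition X s \<tau> *v x + oriented_integral ?h \<tau> s"
    using transition_variation_of_constants_apply[OF X Kp continuous_C Y_def, of "mat 1" s \<tau> x] by simp
  then have "norm (transition Y s \<tau> *v x) \<le> norm (transition X s \<tau> *v x) + norm (oriented_integral ?h \<tau> s)"
    by (simp add: norm_triangle_ineq)
  also have "\<dots> \<le> K0 * exp (\<epsilon> * \<bar>\<tau>\<bar>) * exp (a * \<bar>s - \<tau>\<bar>) * norm x
      + ?\<beta> * exp (a * \<bar>s - \<tau>\<bar>) * \<bar>oriented_integral u \<tau> s\<bar>"
    using unperturbed_le perturbation_le by (rule add_mono)
  also have "\<dots> = exp (a * \<bar>s - \<tau>\<bar>) * (K0 * exp (\<epsilon> * \<bar>\<tau>\<bar>) * norm x + ?\<beta> * \<bar>oriented_integral u \<tau> s\<bar>)"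
    by (simp add: algebra_simps)
  finally have "u s \<le> exp (- a * \<bar>s - \<tau>\<bar>)
      * (exp (a * \<bar>s - \<tau>\<bar>) * (K0 * exp (\<epsilon> * \<bar>\<tau>\<bar>) * norm x + ?\<beta> * \<bar>oriented_integral u \<tau> s\<bar>))"
    unfolding u_def Y_def by (rule mult_left_mono) simp
  then show ?thesis by (simp add: mult.assoc[symmetric] flip: exp_add)
qed

lemma nonuniform_bounded_growth_injection:
  fixes X :: "real \<Rightarrow> real^'n^'n" and Kp :: "real \<Rightarrow> real^'m^'n"
  assumes X: "continuous_on UNIV X" and Kp: "continuous_on UNIV Kp"
    and mnorm_Kp_le: "\<And>z. mnorm (Kp z) \<le> \<K> * exp (- \<delta> * \<bar>z\<bar>)"
    and growth: "nonuniform_bounded_growth X K0 a \<epsilon>"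
  shows "nonuniform_bounded_growth (\<lambda>t. X t - Kp t ** C t) K0 (a + K0 * \<K> * \<C>) \<epsilon>"
  unfolding nonuniform_bounded_growth_def
proof (intro allI mnorm_le)
  fix s \<tau> :: real and x :: "real^'n"
  define Y where "Y = (\<lambda>t. X t - Kp t ** C t)"
  define u where "u = (\<lambda>r. exp (- a * \<bar>r - \<tau>\<bar>) * norm (transition Y r \<tau> *v x))"
  have "continuous_on UNIV Y"
    unfolding Y_def by (rule continuous_on_output_injection[OF X Kp continuous_C])
  then have "continuous_on UNIV u"
    unfolding u_def by (intro continuous_intros continuous_on_transition_apply)
  then have "u s \<le> K0 * exp (\<epsilon> * \<bar>\<tau>\<bar>) * norm x * exp (K0 * \<K> * \<C> * \<bar>s - \<tau>\<bar>)"
    using weighted_injected_transition_le[OF X Kp mnorm_Kp_le growth] K0_pos gain_pos output_pos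
    by (intro gronwall) (auto simp: u_def Y_def)
  then have "exp (a * \<bar>s - \<tau>\<bar>) * u s
      \<le> exp (a * \<bar>s - \<tau>\<bar>) * (K0 * exp (\<epsilon> * \<bar>\<tau>\<bar>) * norm x * exp (K0 * \<K> * \<C> * \<bar>s - \<tau>\<bar>))"
    by (rule mult_left_mono) simp
  moreover have "exp (a * \<bar>s - \<tau>\<bar>) * u s = norm (transition Y s \<tau> *v x)"
    by (simp add: u_def mult.assoc[symmetric] flip: exp_add)
  moreover have "exp (a * \<bar>s - \<tau>\<bar>) * (K0 * exp (\<epsilon> * \<bar>\<tau>\<bar>) * norm x * exp (K0 * \<K> * \<C> * \<bar>s - \<tau>\<bar>))
      = K0 * exp (\<epsilon> * \<bar>\<tau>\<bar>) * exp ((a + K0 * \<K> * \<C>) * \<bar>s - \<tau>\<bar>) * norm x"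
    by (simp add: ring_distribs exp_add mult_ac)
  ultimately show "norm (transition Y s \<tau> *v x) \<le> K0 * exp (\<epsilon> * \<bar>\<tau>\<bar>) * exp ((a + K0 * \<K> * \<C>) * \<bar>s - \<tau>\<bar>) * norm x"
    by linarith
qed


lemma norm_output_le_injected:
  fixes X :: "real \<Rightarrow> real^'n^'n" and Kp :: "real \<Rightarrow> real^'m^'n"
  assumes X: "continuous_on UNIV X" and Kp: "continuous_on UNIV Kp"
    and Y: "Y = (\<lambda>t. X t - Kp t ** C t)"
    and "t0 \<in> {p..q}" "s \<in> {p..q}" and "0 \<le> L"
    and kernel: "\<And>s r v. s \<in> {p..q} \<Longrightarrow> r \<in> {p..q} \<Longrightarrow>
      norm (C s *v (transition X s r *v (Kp r *v v))) \<le> L * norm v"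
  shows "norm (C s *v (transition X s t0 *v x))
    \<le> norm (C s *v (transition Y s t0 *v x)) + L * integral {p..q} (\<lambda>r. norm (C r *v (transition Y r t0 *v x)))"
proof -
  let ?h = "\<lambda>r. - (C s *v (transition X s r *v (Kp r *v (C r *v (transition Y r t0 *v x)))))"
  let ?y = "\<lambda>r. norm (C r *v (transition Y r t0 *v x))"
  have "continuous_on UNIV Y"
    unfolding Y by (rule continuous_on_output_injection[OF X Kp continuous_C])
  then have Yx: "continuous_on UNIV (\<lambda>r. transition Y r t0 *v x)"
    by (rule continuous_on_transition_apply)
  have y: "continuous_on UNIV ?y"
    by (intro continuous_intros bounded_bilinear.continuous_on[OF bounded_bilinear_matrix_vector_mult continuous_C Yx])
  have "norm (oriented_integral ?h t0 s) \<le> \<bar>oriented_integral (\<lambda>r. L * ?y r) t0 s\<bar>"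
  proof (rule norm_oriented_integral_le)
    show "continuous_on UNIV ?h"
      by (intro continuous_intros bounded_bilinear.continuous_on[OF bounded_bilinear_matrix_vector_mult]
          continuous_on_transition_2[OF X] Kp continuous_C Yx)
    fix r assume "r \<in> {min t0 s..max t0 s}"
    then have "r \<in> {p..q}" using \<open>t0 \<in> {p..q}\<close> \<open>s \<in> {p..q}\<close> by auto
    then show "norm (?h r) \<le> L * ?y r"
      using kernel[OF \<open>s \<in> {p..q}\<close>] by simp
  qed (intro continuous_intros y)
  also have "\<dots> \<le> L * integral {p..q} ?y"
    using abs_oriented_integral_le_integral[of "\<lambda>r. L * ?y r"] y assms(4,5,6)
    by (simp add: continuous_intros)
  finally have "norm (oriented_integral ?h t0 s) \<le> L * integral {p..q} ?y" .
  moreover have "C s *v (transition Y s t0 *v x) = C s *v (transition X s t0 *v x) + oriented_integral ?h t0 s"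
    by (rule transition_variation_of_constants_apply[OF X Kp continuous_C Y])
  ultimately show ?thesis
    using norm_triangle_ineq4[of "C s *v (transition Y s t0 *v x)" "oriented_integral ?h t0 s"] by simp
qed

lemma integral_output_square_le_injected:
  fixes X :: "real \<Rightarrow> real^'n^'n" and Kp :: "real \<Rightarrow> real^'m^'n"
  assumes X: "continuous_on UNIV X" and Kp: "continuous_on UNIV Kp"
    and Y: "Y = (\<lambda>t. X t - Kp t ** C t)"
    and "p \<le> q" "t0 \<in> {p..q}" "0 \<le> L"
    and kernel: "\<And>s r v. s \<in> {p..q} \<Longrightarrow> r \<in> {p..q} \<Longrightarrow>
      norm (C s *v (transition X s r *v (Kp r *v v))) \<le> L * norm v"
  shows "integral {p..q} (\<lambda>s. (norm (C s *v (transition X s t0 *v x)))^2)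
    \<le> (2 + 2 * L^2 * (q - p)^2) * integral {p..q} (\<lambda>s. (norm (C s *v (transition Y s t0 *v x)))^2)"
proof -
  define y where "y s = norm (C s *v (transition Y s t0 *v x))" for s
  define I where "I = integral {p..q} (\<lambda>s. (y s)^2)"
  have "continuous_on UNIV Y"
    unfolding Y by (rule continuous_on_output_injection[OF X Kp continuous_C])
  then have y: "continuous_on UNIV y" unfolding y_def[abs_def]
    by (intro continuous_intros bounded_bilinear.continuous_on[OF bounded_bilinear_matrix_vector_mult continuous_C]
        continuous_on_transition_apply)
  have "continuous_on UNIV (\<lambda>s. C s *v (transition X s t0 *v x))"
    by (intro bounded_bilinear.continuous_on[OF bounded_bilinear_matrix_vector_mult continuous_C]
        continuous_on_transition_apply X)
  then have "integral {p..q} (\<lambda>s. (norm (C s *v (transition X s t0 *v x)))^2)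
      \<le> integral {p..q} (\<lambda>s. 2 * (y s)^2 + 2 * L^2 * ((q - p) * I))"
  proof (intro Henstock_Kurzweil_Integration.integral_le integrable_on_continuous_UNIV continuous_intros y)
    fix s assume "s \<in> {p..q}"
    have "norm (C s *v (transition X s t0 *v x)) \<le> y s + L * integral {p..q} y"
      unfolding y_def using norm_output_le_injected[OF X Kp Y assms(5) \<open>s \<in> {p..q}\<close> assms(6) kernel] .
    then have "(norm (C s *v (transition X s t0 *v x)))^2 \<le> (y s + L * integral {p..q} y)^2"
      by (intro power_mono) auto
    also have "\<dots> \<le> 2 * (y s)^2 + 2 * L^2 * (integral {p..q} y)^2"
      using sum_squares_bound[of "y s" "L * integral {p..q} y"] by (simp add: power2_sum power_mult_distrib)
    also have "\<dots> \<le> 2 * (y s)^2 + 2 * L^2 * ((q - p) * I)"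
      using Cauchy_Schwarz_ineq_integral[OF y \<open>p \<le> q\<close>]
      by (intro add_left_mono mult_left_mono) (auto simp: I_def)
    finally show "(norm (C s *v (transition X s t0 *v x)))^2 \<le> 2 * (y s)^2 + 2 * L^2 * ((q - p) * I)" .
  qed
  also have "\<dots> = 2 * I + 2 * L^2 * ((q - p) * I) * (q - p)"
    using \<open>p \<le> q\<close> unfolding I_def
    by (subst integral_add) (auto intro!: integrable_on_continuous_UNIV continuous_intros y)
  also have "\<dots> = (2 + 2 * L^2 * (q - p)^2) * I"
    by (simp add: power2_eq_square algebra_simps)
  finally show ?thesis by (simp add: y_def I_def)
qed

lemma observability_gramians_le_injected:
  fixes X :: "real \<Rightarrow> real^'n^'n" and Kp :: "real \<Rightarrow> real^'m^'n"
  assumes X: "continuous_on UNIV X" and Kp: "continuous_on UNIV Kp"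
    and mnorm_Kp_le: "\<And>z. mnorm (Kp z) \<le> \<K> * exp (- \<delta> * \<bar>z\<bar>)"
    and growth: "nonuniform_bounded_growth X K0 a \<epsilon>" and "0 \<le> a" and "0 \<le> \<sigma>"
  defines "c \<equiv> 2 + 2 * (\<C> * K0 * \<K> * exp ((\<gamma> + a) * \<sigma>))^2 * \<sigma>^2"
  shows "loewner_le (gram_M X C t (t + \<sigma>)) (c *\<^sub>R gram_M (\<lambda>t. X t - Kp t ** C t) C t (t + \<sigma>))
    \<and> loewner_le (gram_N X C t (t + \<sigma>)) (c *\<^sub>R gram_N (\<lambda>t. X t - Kp t ** C t) C t (t + \<sigma>))"
proof -
  define Y where "Y = (\<lambda>t. X t - Kp t ** C t)"
  have Y: "continuous_on UNIV Y"
    unfolding Y_def by (rule continuous_on_output_injection[OF X Kp continuous_C])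
  have kernel: "norm (C s *v (transition X s r *v (Kp r *v v))) \<le> \<C> * K0 * \<K> * exp ((\<gamma> + a) * \<sigma>) * norm v"
    if "s \<in> {t..t + \<sigma>}" "r \<in> {t..t + \<sigma>}" for s r v
    using that by (intro norm_output_kernel_le[OF growth \<open>0 \<le> a\<close> mnorm_Kp_le]) auto
  have L: "0 \<le> \<C> * K0 * \<K> * exp ((\<gamma> + a) * \<sigma>)"
    using K0_pos gain_pos output_pos by simp
  have "integral {t..t + \<sigma>} (\<lambda>s. (norm (C s *v (transition X s t0 *v x)))^2)
      \<le> c * integral {t..t + \<sigma>} (\<lambda>s. (norm (C s *v (transition Y s t0 *v x)))^2)"
    if "t0 \<in> {t..t + \<sigma>}" for t0 x
    using integral_output_square_le_injected[OF X Kp Y_def _ that L kernel] \<open>0 \<le> \<sigma>\<close>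
    by (simp add: c_def)
  then show ?thesis
    unfolding Y_def[symmetric] loewner_le_scaleR_iff inner_gram_M[OF X continuous_C] inner_gram_M[OF Y continuous_C]
      inner_gram_N[OF X continuous_C] inner_gram_N[OF Y continuous_C]
    using \<open>0 \<le> \<sigma>\<close> by simp
qed

lemma observability_gramians_equivalent_injected:
  fixes X :: "real \<Rightarrow> real^'n^'n" and Kp :: "real \<Rightarrow> real^'m^'n"
  assumes X: "continuous_on UNIV X" and Kp: "continuous_on UNIV Kp"
    and mnorm_Kp_le: "\<And>z. mnorm (Kp z) \<le> \<K> * exp (- \<delta> * \<bar>z\<bar>)"
    and growth: "nonuniform_bounded_growth X K0 a \<epsilon>" and "0 \<le> a" and "0 \<le> \<sigma>"
  defines "c \<equiv> 2 + 2 * (\<C> * K0 * \<K> * exp ((\<gamma> + (a + K0 * \<K> * \<C>)) * \<sigma>))^2 * \<sigma>^2"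
  shows "loewner_le (gram_M X C t (t + \<sigma>)) (c *\<^sub>R gram_M (\<lambda>t. X t - Kp t ** C t) C t (t + \<sigma>))
    \<and> loewner_le (gram_N X C t (t + \<sigma>)) (c *\<^sub>R gram_N (\<lambda>t. X t - Kp t ** C t) C t (t + \<sigma>))"
    and "loewner_le (gram_M (\<lambda>t. X t - Kp t ** C t) C t (t + \<sigma>)) (c *\<^sub>R gram_M X C t (t + \<sigma>))
    \<and> loewner_le (gram_N (\<lambda>t. X t - Kp t ** C t) C t (t + \<sigma>)) (c *\<^sub>R gram_N X C t (t + \<sigma>))"
proof -
  define Y where "Y = (\<lambda>t. X t - Kp t ** C t)"
  have "nonuniform_bounded_growth X K0 (a + K0 * \<K> * \<C>) \<epsilon>"
    using K0_pos gain_pos output_pos by (intro nonuniform_bounded_growth_mono[OF growth]) auto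
  moreover have "0 \<le> a + K0 * \<K> * \<C>"
    using \<open>0 \<le> a\<close> K0_pos gain_pos output_pos by simp
  ultimately show "loewner_le (gram_M X C t (t + \<sigma>)) (c *\<^sub>R gram_M Y C t (t + \<sigma>))
    \<and> loewner_le (gram_N X C t (t + \<sigma>)) (c *\<^sub>R gram_N Y C t (t + \<sigma>))"
    unfolding c_def Y_def by (rule observability_gramians_le_injected[OF X Kp mnorm_Kp_le _ _ \<open>0 \<le> \<sigma>\<close>])
  have "continuous_on UNIV Y"
    unfolding Y_def by (rule continuous_on_output_injection[OF X Kp continuous_C])
  moreover have "X = (\<lambda>t. Y t - (- Kp t) ** C t)"
    by (simp add: Y_def matrix_mul_minus_left)
  moreover have "nonuniform_bounded_growth Y K0 (a + K0 * \<K> * \<C>) \<epsilon>"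
    unfolding Y_def by (rule nonuniform_bounded_growth_injection[OF X Kp mnorm_Kp_le growth])
  ultimately show "loewner_le (gram_M Y C t (t + \<sigma>)) (c *\<^sub>R gram_M X C t (t + \<sigma>))
    \<and> loewner_le (gram_N Y C t (t + \<sigma>)) (c *\<^sub>R gram_N X C t (t + \<sigma>))"
    using Kp mnorm_Kp_le \<open>0 \<le> a + K0 * \<K> * \<C>\<close> unfolding c_def
    by (simp only:) (intro observability_gramians_le_injected[OF _ _ _ _ _ \<open>0 \<le> \<sigma>\<close>];
        auto simp: mnorm_minus intro: continuous_intros)
qed

end

theorem mainTheorem3:
  fixes A :: "real \<Rightarrow> real^'n^'n" and K :: "real \<Rightarrow> real^'m^'n" and C :: "real \<Rightarrow> real^'n^'m"
    and K0 a \<epsilon> \<K> \<C> \<delta> \<gamma> :: real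
  assumes "continuous_on UNIV A" "continuous_on UNIV K" "continuous_on UNIV C"
    and "K0 > 0" "a > 0" "\<epsilon> > 0"
    and "nonuniform_bounded_growth A K0 a \<epsilon>"
    and "\<K> > 0" "\<C> > 0" "\<delta> > 0" "\<gamma> \<ge> 0"
    and "\<forall>z. mnorm (K z) \<le> \<K> * exp (- \<delta> * \<bar>z\<bar>)"
    and "\<forall>z. mnorm (C z) \<le> \<C> * exp (\<gamma> * \<bar>z\<bar>)"
    and "\<delta> > \<gamma> + \<epsilon>"
  shows "NUCO A C \<longleftrightarrow> NUCO (\<lambda>t. A t - K t ** C t) C"
proof -
  interpret output_injection_bounds C K0 \<epsilon> \<K> \<C> \<delta> \<gamma>
    using assms by unfold_locales auto
  define c where "c \<sigma> = 2 + 2 * (\<C> * K0 * \<K> * exp ((\<gamma> + (a + K0 * \<K> * \<C>)) * \<sigma>))^2 * \<sigma>^2" for \<sigma>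
  have "0 < c \<sigma>" for \<sigma>
    by (simp add: c_def add_pos_nonneg)
  moreover note observability_gramians_equivalent_injected[OF assms(1,2) _ assms(7), folded c_def]
  ultimately show ?thesis
    using NUCO_transfer[of c A C "\<lambda>t. A t - K t ** C t"] NUCO_transfer[of c "\<lambda>t. A t - K t ** C t" C A]
      assms(5,12) by (meson less_imp_le)
qed

end
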